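(* For every odd integer $n\geq 3$ and every $i\in[1,7]$, there exists a $D_i$-decomposition of $K^*_{n\times 7}$.
   Context: For a simple graph $G$, $G^*$ is the digraph with vertex set $V(G)$ and arc set $\bigcup_{\{x,y\}\in E(G)}\{(x,y),(y,x)\}$. $K_{n\times 7}$ is the complete multipartite simple graph with $n$ parts each of size $7$, and $K^*_{n\times 7}=(K_{n\times 7})^*$. A $D$-decomposition of a digraph $K$ is a set of subdigraphs of $K$, each isomorphic to $D$, such that every arc of $K$ lies in exactly one of them. For distinct vertices $v_0,\dots,v_6$, the digraphs $D_i[v_0,v_1,\dots,v_6]$ ($i\in[1,7]$) all have vertex set $\{v_0,\dots,v_6\}$ and the following arc sets: $D_1$: $(v_1,v_0),(v_1,v_2),(v_2,v_3),(v_3,v_4),(v_4,v_5),(v_5,v_6),(v_6,v_0)$; $D_2$: $(v_1,v_0),(v_2,v_1),(v_2,v_3),(v_3,v_4),(v_4,v_5),(v_5,v_6),(v_6,v_0)$; $D_3$: $(v_1,v_0),(v_1,v_2),(v_3,v_2),(v_3,v_4),(v_4,v_5),(v_5,v_6),(v_6,v_0)$; $D_4$: $(v_1,v_0),(v_1,v_2),(v_2,v_3),(v_4,v_3),(v_4,v_5),(v_5,v_6),(v_6,v_0)$; $D_5$: $(v_1,v_0),(v_2,v_1),(v_3,v_2),(v_3,v_4),(v_4,v_5),(v_5,v_6),(v_6,v_0)$; $D_6$: $(v_1,v_0),(v_2,v_1),(v_2,v_3),(v_3,v_4),(v_5,v_4),(v_5,v_6),(v_6,v_0)$; $D_7$: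 $(v_1,v_0),(v_1,v_2),(v_3,v_2),(v_3,v_4),(v_4,v_5),(v_6,v_5),(v_6,v_0)$. $D_i$ also denotes the isomorphism type of $D_i[v_0,\dots,v_6]$. *)

theory Defs
  imports Main
begin

type_synonym 'a sgraph = "'a set \<times> 'a set set"
type_synonym 'a digraph = "'a set \<times> ('a \<times> 'a) set"

definition dstar :: "'a sgraph \<Rightarrow> 'a digraph" where
  "dstar G = (fst G, \<Union>e\<in>snd G. {(x,y). e = {x,y} \<and> x \<noteq> y})"

definition K_multi7 :: "nat \<Rightarrow> (nat \<times> nat) sgraph" where
  "K_multi7 n = ({0..<n} \<times> {0..<7},
     {{x,y} | x y. x \<in> {0..<n} \<times> {0..<7} \<and> y \<in> {0..<n} \<times> {0..<7} \<and> fst x \<noteq> fst y})"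

definition Kstar_multi7 :: "nat \<Rightarrow> (nat \<times> nat) digraph" where
  "Kstar_multi7 n = dstar (K_multi7 n)"

definition subdigraph :: "'a digraph \<Rightarrow> 'a digraph \<Rightarrow> bool" where
  "subdigraph H K \<longleftrightarrow> fst H \<subseteq> fst K \<and> snd H \<subseteq> snd K \<and> snd H \<subseteq> fst H \<times> fst H"

definition digraph_iso :: "'a digraph \<Rightarrow> 'b digraph \<Rightarrow> bool" where
  "digraph_iso G H \<longleftrightarrow> (\<exists>f. bij_betw f (fst G) (fst H) \<and>
      snd H = (\<lambda>(x,y). (f x, f y)) ` snd G \<and> snd G \<subseteq> fst G \<times> fst G)"

definition is_decomposition :: "'b digraph \<Rightarrow> 'a digraph \<Rightarrow> 'a digraph set \<Rightarrow> bool" where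
  "is_decomposition D K S \<longleftrightarrow>
     (\<forall>H\<in>S. subdigraph H K \<and> digraph_iso D H) \<and>
     (\<forall>a\<in>snd K. \<exists>!H. H \<in> S \<and> a \<in> snd H)"

text \<open>Arcs of D_i[v0,...,v6], as pairs of indices (j,k) meaning the arc (v_j,v_k).\<close>
fun D_arcs :: "nat \<Rightarrow> (nat \<times> nat) list" where
  "D_arcs (Suc 0) = [(1,0),(1,2),(2,3),(3,4),(4,5),(5,6),(6,0)]"
| "D_arcs (Suc (Suc 0)) = [(1,0),(2,1),(2,3),(3,4),(4,5),(5,6),(6,0)]"
| "D_arcs (Suc (Suc (Suc 0))) = [(1,0),(1,2),(3,2),(3,4),(4,5),(5,6),(6,0)]"
| "D_arcs (Suc (Suc (Suc (Suc 0)))) = [(1,0),(1,2),(2,3),(4,3),(4,5),(5,6),(6,0)]"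
| "D_arcs (Suc (Suc (Suc (Suc (Suc 0))))) = [(1,0),(2,1),(3,2),(3,4),(4,5),(5,6),(6,0)]"
| "D_arcs (Suc (Suc (Suc (Suc (Suc (Suc 0)))))) = [(1,0),(2,1),(2,3),(3,4),(5,4),(5,6),(6,0)]"
| "D_arcs (Suc (Suc (Suc (Suc (Suc (Suc (Suc 0))))))) = [(1,0),(1,2),(3,2),(3,4),(4,5),(6,5),(6,0)]"
| "D_arcs _ = []"

definition D_on :: "nat \<Rightarrow> 'a list \<Rightarrow> 'a digraph" where
  "D_on i vs = (set vs, (\<lambda>(j,k). (vs ! j, vs ! k)) ` set (D_arcs i))"

definition D_type :: "nat \<Rightarrow> nat digraph" where
  "D_type i = D_on i [0..<7]"

end

theory Submission
  imports Defs "HOL-Number_Theory.Cong"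
begin

text \<open>Identify the parts of \<open>K_{n\<times>7}\<close> with \<open>\<int>/n\<close> and the seven vertices of each part
  with \<open>\<int>/7\<close>. Label vertex \<open>j\<close> of \<open>D_i\<close> by a pair \<open>(k\<^sub>j, a\<^sub>j)\<close> such that along the seven
  arcs the level differences \<open>a\<^sub>l - a\<^sub>j\<close> run through all of \<open>\<int>/7\<close>, while the part
  differences \<open>k\<^sub>l - k\<^sub>j\<close> are \<open>\<plusminus>1\<close> or \<open>\<plusminus>2\<close>, hence units modulo the odd \<open>n\<close>;
  the same holds for any two vertices of equal level, so every copy has seven distinct vertices.
  The copies \<open>j \<mapsto> (k\<^sub>j d + g, a\<^sub>j + h)\<close> with \<open>d \<noteq> 0\<close> then decompose \<open>K*_{n\<times>7}\<close>: for an
  arc from \<open>(u\<^sub>1, u\<^sub>2)\<close> to \<open>(v\<^sub>1, v\<^sub>2)\<close>, the level difference \<open>v\<^sub>2 - u\<^sub>2\<close> singles out the arc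
  \<open>(j, l)\<close> of \<open>D_i\<close> it must come from, the part difference \<open>v\<^sub>1 - u\<^sub>1 = (k\<^sub>l - k\<^sub>j) d\<close>
  determines \<open>d\<close>, and the tail then determines \<open>g\<close> and \<open>h\<close>.\<close>

lemma D_arcs_less: "(j, l) \<in> set (D_arcs i) \<Longrightarrow> j < 7 \<and> l < 7"
  by (induction i rule: D_arcs.induct) auto

lemma digraph_iso_D_type_D_on:
  assumes "distinct vs" and "length vs = 7"
  shows "digraph_iso (D_type i) (D_on i vs)"
proof -
  have "bij_betw (\<lambda>j. vs ! j) (set [0..<7]) (set vs)"
    using bij_betw_nth[OF assms(1)] assms(2) by (simp add: lessThan_atLeast0)
  then show ?thesis
    unfolding digraph_iso_def D_type_def D_on_def
    using D_arcs_less by (force simp: image_image intro!: exI[of _ "\<lambda>j. vs ! j"] image_cong)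
qed

lemma fst_Kstar_multi7: "fst (Kstar_multi7 n) = {0..<n} \<times> {0..<7}"
  by (simp add: Kstar_multi7_def dstar_def K_multi7_def)

lemma arc_Kstar_multi7_iff:
  "(x, y) \<in> snd (Kstar_multi7 n) \<longleftrightarrow>
     x \<in> {0..<n} \<times> {0..<7} \<and> y \<in> {0..<n} \<times> {0..<7} \<and> fst x \<noteq> fst y"
  unfolding Kstar_multi7_def dstar_def K_multi7_def by (auto simp: doubleton_eq_iff) blast

definition residue :: "nat \<Rightarrow> int \<Rightarrow> nat" where
  "residue m x = nat (x mod int m)"

lemma residue_less: "0 < m \<Longrightarrow> residue m x < m"
  by (simp add: residue_def nat_less_iff)

lemma residue_eq_iff: "u < m \<Longrightarrow> residue m x = u \<longleftrightarrow> [x = int u] (mod int m)"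
  by (auto simp: residue_def cong_def)

lemma residue_eq_residue_iff: "0 < m \<Longrightarrow> residue m x = residue m y \<longleftrightarrow> [x = y] (mod int m)"
  by (simp add: residue_def cong_def eq_nat_nat_iff)

lemma cong_residue: "0 < m \<Longrightarrow> [int (residue m x) = x] (mod int m)"
  by (simp add: residue_def cong_def)

lemma residue_affine_neq:
  assumes "coprime (a - b) (int n)" and "d \<in> {1..<int n}"
  shows "residue n (a * d + g) \<noteq> residue n (b * d + g)"
proof
  assume "residue n (a * d + g) = residue n (b * d + g)"
  then have "[(a - b) * d = (a - b) * 0] (mod int n)"
    using assms(2) by (simp add: residue_eq_residue_iff cong_iff_dvd_diff algebra_simps)
  then have "[d = 0] (mod int n)"
    using cong_mult_lcancel[OF assms(1)] by blast
  then show False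
    using assms(2) cong_less_imp_eq_int[of d "int n" 0] by simp
qed

fun copy_vertex :: "nat \<Rightarrow> int list \<Rightarrow> int list \<Rightarrow> int \<times> int \<times> int \<Rightarrow> nat \<Rightarrow> nat \<times> nat" where
  "copy_vertex n ks as (d, g, h) j = (residue n (ks ! j * d + g), residue 7 (as ! j + h))"

definition copy_D :: "nat \<Rightarrow> nat \<Rightarrow> int list \<Rightarrow> int list \<Rightarrow> int \<times> int \<times> int \<Rightarrow> (nat \<times> nat) digraph" where
  "copy_D i n ks as p = D_on i (map (copy_vertex n ks as p) [0..<7])"

definition copy_params :: "nat \<Rightarrow> (int \<times> int \<times> int) set" where
  "copy_params n = {1..<int n} \<times> {0..<int n} \<times> {0..<7}"

definition admissible_labels :: "nat \<Rightarrow> nat \<Rightarrow> int list \<Rightarrow> int list \<Rightarrow> bool" where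
  "admissible_labels n i ks as \<longleftrightarrow>
     bij_betw (\<lambda>(j, l). (as ! l - as ! j) mod 7) (set (D_arcs i)) {0..<7} \<and>
     (\<forall>(j, l) \<in> set (D_arcs i). coprime (ks ! l - ks ! j) (int n)) \<and>
     (\<forall>j<7. \<forall>l<7. j \<noteq> l \<longrightarrow> [as ! j = as ! l] (mod 7) \<longrightarrow> coprime (ks ! l - ks ! j) (int n))"

lemma arc_copy_D_iff:
  "(x, y) \<in> snd (copy_D i n ks as p) \<longleftrightarrow>
     (\<exists>(j, l) \<in> set (D_arcs i). x = copy_vertex n ks as p j \<and> y = copy_vertex n ks as p l)"
  using D_arcs_less by (force simp: copy_D_def D_on_def)

lemma copy_vertex_mem: "0 < n \<Longrightarrow> copy_vertex n ks as p j \<in> {0..<n} \<times> {0..<7}"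
  by (cases p) (simp add: residue_less)

lemma distinct_copy_vertices:
  assumes adm: "admissible_labels n i ks as" and p: "p \<in> copy_params n"
  shows "distinct (map (copy_vertex n ks as p) [0..<7])"
proof -
  obtain d g h where dgh: "p = (d, g, h)" and d: "d \<in> {1..<int n}"
    using p by (auto simp: copy_params_def)
  have "copy_vertex n ks as p j \<noteq> copy_vertex n ks as p l" if "j < 7" "l < 7" "j \<noteq> l" for j l
  proof (cases "[as ! j = as ! l] (mod 7)")
    case True
    then have "coprime (ks ! l - ks ! j) (int n)"
      using adm that by (simp add: admissible_labels_def)
    then have "residue n (ks ! l * d + g) \<noteq> residue n (ks ! j * d + g)"
      by (rule residue_affine_neq[OF _ d])
    then show ?thesis
      by (simp add: dgh)
  next
    case False
    then show ?thesis
      using residue_eq_residue_iff[of 7] by (auto simp: dgh cong_add_rcancel)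
  qed
  then show ?thesis
    by (auto simp: distinct_conv_nth)
qed

lemma copy_D_in_Kstar_multi7:
  assumes adm: "admissible_labels n i ks as" and p: "p \<in> copy_params n"
  shows "subdigraph (copy_D i n ks as p) (Kstar_multi7 n) \<and> digraph_iso (D_type i) (copy_D i n ks as p)"
proof -
  obtain d g h where dgh: "p = (d, g, h)" and d: "d \<in> {1..<int n}"
    using p by (auto simp: copy_params_def)
  then have n: "0 < n" by simp
  have "(x, y) \<in> snd (Kstar_multi7 n)" if arc: "(x, y) \<in> snd (copy_D i n ks as p)" for x y
  proof -
    obtain j l where jl: "(j, l) \<in> set (D_arcs i)"
      and xy: "x = copy_vertex n ks as p j" "y = copy_vertex n ks as p l"
      using arc unfolding arc_copy_D_iff by blast
    have "coprime (ks ! l - ks ! j) (int n)"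
      using adm jl by (auto simp: admissible_labels_def)
    then have "residue n (ks ! l * d + g) \<noteq> residue n (ks ! j * d + g)"
      by (rule residue_affine_neq[OF _ d])
    then have "fst x \<noteq> fst y"
      by (simp add: xy dgh)
    then show ?thesis
      using copy_vertex_mem[OF n] by (simp add: arc_Kstar_multi7_iff xy)
  qed
  moreover have "fst (copy_D i n ks as p) \<subseteq> fst (Kstar_multi7 n)"
    by (auto simp: copy_D_def D_on_def fst_Kstar_multi7 dgh residue_less n)
  moreover have "snd (copy_D i n ks as p) \<subseteq> fst (copy_D i n ks as p) \<times> fst (copy_D i n ks as p)"
    using D_arcs_less by (auto simp: copy_D_def D_on_def)
  ultimately show ?thesis
    using digraph_iso_D_type_D_on[OF distinct_copy_vertices[OF adm p]]
    by (auto simp: subdigraph_def copy_D_def)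
qed

lemma arc_in_some_copy:
  assumes adm: "admissible_labels n i ks as" and arc: "(x, y) \<in> snd (Kstar_multi7 n)"
  shows "\<exists>p \<in> copy_params n. (x, y) \<in> snd (copy_D i n ks as p)"
proof -
  obtain u1 u2 v1 v2 where xy: "x = (u1, u2)" "y = (v1, v2)"
    and range: "u1 < n" "u2 < 7" "v1 < n" "v2 < 7" and "u1 \<noteq> v1"
    using arc by (cases x, cases y) (auto simp: arc_Kstar_multi7_iff)
  have "(int v2 - int u2) mod 7 \<in> (\<lambda>(j, l). (as ! l - as ! j) mod 7) ` set (D_arcs i)"
    using adm by (simp add: admissible_labels_def bij_betw_def)
  then obtain j l where jl: "(j, l) \<in> set (D_arcs i)"
    and level: "[as ! l - as ! j = int v2 - int u2] (mod 7)"
    by (auto simp: cong_def)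
  define c where "c = ks ! l - ks ! j"
  have "coprime c (int n)"
    using adm jl by (auto simp: admissible_labels_def c_def)
  then obtain e where e: "[c * e = 1] (mod int n)"
    using cong_solve_coprime_int by blast
  define d where "d = e * (int v1 - int u1) mod int n"
  define g where "g = (int u1 - ks ! j * d) mod int n"
  define h where "h = (int u2 - as ! j) mod 7"
  have cd: "[c * d = int v1 - int u1] (mod int n)"
  proof -
    have "[c * d = (c * e) * (int v1 - int u1)] (mod int n)"
      by (simp add: d_def cong_def mod_simps ac_simps)
    also have "[(c * e) * (int v1 - int u1) = 1 * (int v1 - int u1)] (mod int n)"
      using e by (rule cong_mult) simp
    finally show ?thesis by simp
  qed
  have "d \<noteq> 0"
  proof
    assume "d = 0"
    then have "[int u1 = int v1] (mod int n)"
      using cd by (simp add: cong_iff_dvd_diff)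
    then show False
      using range \<open>u1 \<noteq> v1\<close> by (simp add: cong_def)
  qed
  moreover have "0 \<le> d" "d < int n" "g \<in> {0..<int n}"
    using range by (simp_all add: d_def g_def)
  ultimately have "(d, g, h) \<in> copy_params n"
    by (simp add: copy_params_def h_def)
  moreover have "copy_vertex n ks as (d, g, h) j = x"
    using range by (simp add: residue_eq_iff xy g_def h_def cong_def mod_simps)
  moreover have "copy_vertex n ks as (d, g, h) l = y"
  proof -
    have "[ks ! l * d + g = c * d + int u1] (mod int n)"
      by (simp add: g_def c_def cong_def mod_simps algebra_simps)
    also have "[c * d + int u1 = (int v1 - int u1) + int u1] (mod int n)"
      using cd by (rule cong_add) simp
    finally have "[ks ! l * d + g = int v1] (mod int n)" by simp
    moreover have "[as ! l + h = int v2] (mod 7)"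
    proof -
      have "[as ! l + h = (as ! l - as ! j) + int u2] (mod 7)"
        by (simp add: h_def cong_def mod_simps algebra_simps)
      also have "[(as ! l - as ! j) + int u2 = (int v2 - int u2) + int u2] (mod 7)"
        using level by (rule cong_add) simp
      finally show ?thesis by simp
    qed
    ultimately show ?thesis
      using range by (simp add: residue_eq_iff xy)
  qed
  ultimately show ?thesis
    unfolding arc_copy_D_iff using jl by blast
qed

lemma arc_copy_D_cong:
  assumes n: "0 < n" and arc: "((x1, x2), (y1, y2)) \<in> snd (copy_D i n ks as (d, g, h))"
  obtains j l where "(j, l) \<in> set (D_arcs i)"
    and "[ks ! j * d + g = int x1] (mod int n)" and "[as ! j + h = int x2] (mod 7)"
    and "[(ks ! l - ks ! j) * d = int y1 - int x1] (mod int n)"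
    and "[as ! l - as ! j = int y2 - int x2] (mod 7)"
proof -
  obtain j l where jl: "(j, l) \<in> set (D_arcs i)"
    and x: "x1 = residue n (ks ! j * d + g)" "x2 = residue 7 (as ! j + h)"
    and y: "y1 = residue n (ks ! l * d + g)" "y2 = residue 7 (as ! l + h)"
    using arc unfolding arc_copy_D_iff by auto
  have x1: "[ks ! j * d + g = int x1] (mod int n)" and x2: "[as ! j + h = int x2] (mod 7)"
    using cong_residue[OF n] cong_residue[of 7] by (simp_all add: x cong_sym)
  have y1: "[ks ! l * d + g = int y1] (mod int n)" and y2: "[as ! l + h = int y2] (mod 7)"
    using cong_residue[OF n] cong_residue[of 7] by (simp_all add: y cong_sym)
  have "[(ks ! l * d + g) - (ks ! j * d + g) = int y1 - int x1] (mod int n)"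
    using y1 x1 by (rule cong_diff)
  moreover have "[(as ! l + h) - (as ! j + h) = int y2 - int x2] (mod 7)"
    using y2 x2 by (rule cong_diff)
  ultimately show thesis
    using that[OF jl x1 x2] by (simp add: algebra_simps)
qed

lemma copy_params_unique:
  assumes adm: "admissible_labels n i ks as"
    and p: "p \<in> copy_params n" and p': "p' \<in> copy_params n"
    and arc: "(x, y) \<in> snd (copy_D i n ks as p)" and arc': "(x, y) \<in> snd (copy_D i n ks as p')"
  shows "p = p'"
proof -
  obtain d g h d' g' h' where pp': "p = (d, g, h)" "p' = (d', g', h')"
    and range: "d \<in> {1..<int n}" "g \<in> {0..<int n}" "h \<in> {0..<7}"
      "d' \<in> {1..<int n}" "g' \<in> {0..<int n}" "h' \<in> {0..<7}"
    using p p' by (auto simp: copy_params_def)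
  then have n: "0 < n" by simp
  obtain x1 x2 y1 y2 where xy: "x = (x1, x2)" "y = (y1, y2)"
    by (cases x, cases y)
  have arc: "((x1, x2), (y1, y2)) \<in> snd (copy_D i n ks as (d, g, h))"
    and arc': "((x1, x2), (y1, y2)) \<in> snd (copy_D i n ks as (d', g', h'))"
    using arc arc' by (simp_all add: xy pp')
  obtain j l where jl: "(j, l) \<in> set (D_arcs i)"
    and x1: "[ks ! j * d + g = int x1] (mod int n)" and x2: "[as ! j + h = int x2] (mod 7)"
    and y1: "[(ks ! l - ks ! j) * d = int y1 - int x1] (mod int n)"
    and y2: "[as ! l - as ! j = int y2 - int x2] (mod 7)"
    by (rule arc_copy_D_cong[OF n arc])
  obtain j' l' where jl': "(j', l') \<in> set (D_arcs i)"
    and x1': "[ks ! j' * d' + g' = int x1] (mod int n)" and x2': "[as ! j' + h' = int x2] (mod 7)"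
    and y1': "[(ks ! l' - ks ! j') * d' = int y1 - int x1] (mod int n)"
    and y2': "[as ! l' - as ! j' = int y2 - int x2] (mod 7)"
    by (rule arc_copy_D_cong[OF n arc'])
  have "(as ! l - as ! j) mod 7 = (as ! l' - as ! j') mod 7"
    using y2 y2' by (simp add: cong_def)
  then have same_arc: "j' = j" "l' = l"
    using adm jl jl' by (auto simp: admissible_labels_def bij_betw_def inj_on_def)
  have "coprime (ks ! l - ks ! j) (int n)"
    using adm jl by (auto simp: admissible_labels_def)
  moreover have "[(ks ! l - ks ! j) * d = (ks ! l - ks ! j) * d'] (mod int n)"
    using y1 y1'[unfolded same_arc] by (metis cong_sym cong_trans)
  ultimately have "[d = d'] (mod int n)"
    by (simp add: cong_mult_lcancel)
  then have d_eq: "d = d'"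
    using range by (auto simp: cong_def)
  have "[ks ! j * d + g = ks ! j * d + g'] (mod int n)"
    using x1 x1'[unfolded same_arc d_eq[symmetric]] by (metis cong_sym cong_trans)
  then have "[g = g'] (mod int n)"
    by (simp add: cong_add_lcancel)
  then have "g = g'"
    using range by (auto simp: cong_def)
  moreover have "[as ! j + h = as ! j + h'] (mod 7)"
    using x2 x2'[unfolded same_arc] by (metis cong_sym cong_trans)
  then have "[h = h'] (mod 7)"
    by (simp add: cong_add_lcancel)
  then have "h = h'"
    using range by (auto simp: cong_def)
  ultimately show ?thesis
    by (simp add: pp' d_eq)
qed

theorem is_decomposition_copies:
  assumes adm: "admissible_labels n i ks as"
  shows "is_decomposition (D_type i) (Kstar_multi7 n) (copy_D i n ks as ` copy_params n)"
  unfolding is_decomposition_def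
proof (intro conjI[OF _ ballI])
  show "\<forall>H \<in> copy_D i n ks as ` copy_params n. subdigraph H (Kstar_multi7 n) \<and> digraph_iso (D_type i) H"
    using copy_D_in_Kstar_multi7[OF adm] by blast
next
  fix a assume a: "a \<in> snd (Kstar_multi7 n)"
  obtain x y where xy: "a = (x, y)"
    by (cases a)
  show "\<exists>!H. H \<in> copy_D i n ks as ` copy_params n \<and> a \<in> snd H"
  proof (rule ex_ex1I)
    show "\<exists>H. H \<in> copy_D i n ks as ` copy_params n \<and> a \<in> snd H"
      using arc_in_some_copy[OF adm a[unfolded xy]] xy by blast
  next
    fix H H' assume "H \<in> copy_D i n ks as ` copy_params n \<and> a \<in> snd H"
      and "H' \<in> copy_D i n ks as ` copy_params n \<and> a \<in> snd H'"
    then show "H = H'"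
      using copy_params_unique[OF adm] xy by blast
  qed
qed

lemma coprime_odd_small:
  fixes c :: int
  assumes "odd n" and "c \<in> {1, -1, 2, -2}"
  shows "coprime c (int n)"
  using assms by auto

definition part_labels :: "int list" where
  "part_labels = [0, 1, 2, 1, 2, 3, 2]"

definition level_labels :: "nat \<Rightarrow> int list" where
  "level_labels i = [[0, 0, 1, 3, 0, 3, 2], [0, 1, 0, 0, 2, 5, 3], [0, 1, 1, 0, 2, 5, 3],
     [0, 1, 1, 3, 2, 5, 3], [0, 1, 0, 0, 2, 5, 3], [0, 0, 1, 3, 0, 6, 2], [0, 0, 1, 3, 0, 6, 4]] ! (i - 1)"

lemma admissible_labels_D:
  assumes "odd n" and "i \<in> {1..7}"
  shows "admissible_labels n i part_labels (level_labels i)"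
proof -
  let ?ks = part_labels and ?as = "level_labels i"
  have "i = 1 \<or> i = 2 \<or> i = 3 \<or> i = 4 \<or> i = 5 \<or> i = 6 \<or> i = 7"
    using assms(2) by auto
  then have "bij_betw (\<lambda>(j, l). (?as ! l - ?as ! j) mod 7) (set (D_arcs i)) {0..<7} \<and>
    (\<forall>(j, l) \<in> set (D_arcs i). ?ks ! l - ?ks ! j \<in> {1, -1, 2, -2}) \<and>
    (\<forall>j<7. \<forall>l<7. j \<noteq> l \<longrightarrow> [?as ! j = ?as ! l] (mod 7) \<longrightarrow> ?ks ! l - ?ks ! j \<in> {1, -1, 2, -2})"
    by (elim disjE; simp add: level_labels_def part_labels_def numeral_eq_Suc less_Suc_eq
        bij_betw_def cong_def; auto)
  then show ?thesis
    using coprime_odd_small[OF assms(1)] by (fastforce simp: admissible_labels_def)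
qed

theorem corollary1p7:
  fixes n i :: nat
  assumes "odd n" and "n \<ge> 3" and "i \<in> {1..7}"
  shows "\<exists>S. is_decomposition (D_type i) (Kstar_multi7 n) S"
  using is_decomposition_copies[OF admissible_labels_D[OF assms(1,3)]] by blast

end
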